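(* For every integer $p\ge 3$ there exist $q\ge1$, a rational polytope $P\subseteq\mathbb{R}^{p+q}$ with $P_I\neq\emptyset$ and a rational objective function $cx+hy$ such that, with $\gamma^*=\max\{cx+hy:(x,y)\in P_I\}$, $$\sup\{cx+hy:(x,y)\in P^{(n)}_{2^{p-1}+1}\}>\gamma^*\quad\text{for all } n\in\mathbb{N}.$$ That is, in general $(2^{p-1}+1)$-disjunctive cuts do not suffice to solve a mixed integer program in finitely many rounds.
   Context: $P_I=\mathrm{conv}\{(x,y)\in P:x\in\mathbb{Z}^p\}$. A $k$-disjunction ($k\ge 2$) is a family of inequalities $d^1x\le\delta^1,\dots,d^kx\le\delta^k$ with $d^i\in\mathbb{Z}^p$ (not necessarily distinct), $\delta^i\in\mathbb{Z}$, such that every $x\in\mathbb{Z}^p$ satisfies $d^ix\le\delta^i$ for some $i$. For a closed convex set $C\subseteq\mathbb{R}^{p+q}$, an inequality $\alpha x+\beta y\le\gamma$ is a $k$-disjunctive cut for $C$ if it is not valid for $C$ and there is a $k$-disjunction such that every $(x,y)\in C$ with $\alpha x+\beta y>\gamma$ satisfies $d^ix>\delta^i$ for all $i$. The $k$-disjunctive closure of $C$ is the intersection of $C$ with all half-spaces given by $k$-disjunctive cuts for $C$; $P^{(0)}_k=P$ and $P^{(n)}_k$ is the $k$-disjunctive closure of $P^{(n-1)}_k$. *)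

theory Defs
  imports Complex_Main
begin

text \<open>Points of R^(p+q) are pairs (x,y) of functions nat => real; only the
coordinates x 0..x (p-1) and y 0..y (q-1) are meaningful, and points of the
ambient space have all other coordinates equal to 0.\<close>

type_synonym pt = "(nat \<Rightarrow> real) \<times> (nat \<Rightarrow> real)"

definition space :: "nat \<Rightarrow> nat \<Rightarrow> pt set" where
  "space p q = {(x, y). (\<forall>i\<ge>p. x i = 0) \<and> (\<forall>j\<ge>q. y j = 0)}"

definition lin :: "nat \<Rightarrow> (nat \<Rightarrow> real) \<Rightarrow> (nat \<Rightarrow> real) \<Rightarrow> real" where
  "lin n a x = (\<Sum>i<n. a i * x i)"

definition conv :: "pt set \<Rightarrow> pt set" where
  "conv S = {z. \<exists>(m::nat) (w::nat \<Rightarrow> real) (v::nat \<Rightarrow> pt).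
      (\<forall>i<m. w i \<ge> 0 \<and> v i \<in> S) \<and> (\<Sum>i<m. w i) = 1 \<and>
      z = ((\<lambda>j. \<Sum>i<m. w i * fst (v i) j), (\<lambda>j. \<Sum>i<m. w i * snd (v i) j))}"

definition rational_polytope :: "nat \<Rightarrow> nat \<Rightarrow> pt set \<Rightarrow> bool" where
  "rational_polytope p q P \<longleftrightarrow>
     (\<exists>(A :: ((nat \<Rightarrow> real) \<times> (nat \<Rightarrow> real) \<times> real) list).
        (\<forall>(ax, ay, b) \<in> set A. (\<forall>i<p. ax i \<in> \<rat>) \<and> (\<forall>j<q. ay j \<in> \<rat>) \<and> b \<in> \<rat>) \<and>
        P = {(x, y) \<in> space p q. \<forall>(ax, ay, b) \<in> set A. lin p ax x + lin q ay y \<le> b})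
     \<and> (\<exists>M. \<forall>(x, y) \<in> P. (\<forall>i<p. \<bar>x i\<bar> \<le> M) \<and> (\<forall>j<q. \<bar>y j\<bar> \<le> M))"

definition int_hull :: "nat \<Rightarrow> pt set \<Rightarrow> pt set" where
  "int_hull p P = conv {(x, y) \<in> P. \<forall>i<p. x i \<in> \<int>}"

definition k_disjunction :: "nat \<Rightarrow> nat \<Rightarrow> (nat \<Rightarrow> nat \<Rightarrow> int) \<Rightarrow> (nat \<Rightarrow> int) \<Rightarrow> bool" where
  "k_disjunction p k d \<delta> \<longleftrightarrow>
     (\<forall>x :: nat \<Rightarrow> int. \<exists>i<k. (\<Sum>j<p. d i j * x j) \<le> \<delta> i)"

definition k_disj_cut :: "nat \<Rightarrow> nat \<Rightarrow> nat \<Rightarrow> pt set \<Rightarrow>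
    (nat \<Rightarrow> real) \<Rightarrow> (nat \<Rightarrow> real) \<Rightarrow> real \<Rightarrow> bool" where
  "k_disj_cut p q k C \<alpha> \<beta> \<gamma> \<longleftrightarrow>
     (\<exists>(x, y) \<in> C. lin p \<alpha> x + lin q \<beta> y > \<gamma>) \<and>
     (\<exists>d \<delta>. k_disjunction p k d \<delta> \<and>
        (\<forall>(x, y) \<in> C. lin p \<alpha> x + lin q \<beta> y > \<gamma> \<longrightarrow>
           (\<forall>i<k. (\<Sum>j<p. real_of_int (d i j) * x j) > real_of_int (\<delta> i))))"

definition k_disj_closure :: "nat \<Rightarrow> nat \<Rightarrow> nat \<Rightarrow> pt set \<Rightarrow> pt set" where
  "k_disj_closure p q k C =
     C \<inter> (\<Inter>{{(x, y). lin p \<alpha> x + lin q \<beta> y \<le> \<gamma>} | \<alpha> \<beta> \<gamma>. k_disj_cut p q k C \<alpha> \<beta> \<gamma>})"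

definition k_disj_iter :: "nat \<Rightarrow> nat \<Rightarrow> nat \<Rightarrow> nat \<Rightarrow> pt set \<Rightarrow> pt set" where
  "k_disj_iter p q k n P = (k_disj_closure p q k ^^ n) P"

end

theory Submission
  imports Defs
begin

text \<open>
  The polytope is a pyramid in \<open>\<real>\<^sup>p \<times> \<real>\<close> over a base \<open>Q \<subseteq> \<real>\<^sup>p\<close> with apex
  \<open>(1/2, \<dots>, 1/2, 1)\<close> at height \<open>t\<close>. Its mixed-integer points have height \<open>0\<close>, so the
  mixed-integer optimum of the height is \<open>0\<close>. The base \<open>Q\<close> is integral and contains
  \<open>2^(p-1) + 2\<close> integral points (the 0/1 vectors with last coordinate 1, the origin and
  \<open>(1, \<dots>, 1, 2)\<close>) such that the midpoint of any two of them lies in the pyramid at height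
  \<open>t/(p-1)\<close> and its reflection in the apex lies in \<open>Q\<close>. By pigeonhole two of these points
  satisfy the same term of a \<open>(2^(p-1) + 1)\<close>-disjunction, so a disjunctive cut is valid at the
  lifted midpoint and at the reflected point, hence at the apex at height \<open>t/(2(p-1))\<close>, and by
  convexity on the whole pyramid of that height. Every round of the closure therefore keeps a
  pyramid, with height divided by \<open>2(p-1)\<close>, whose apex lies above the mixed-integer optimum.
\<close>

lemma lin_split_last: "0 < p \<Longrightarrow> lin p a x = (\<Sum>i<p-1. a i * x i) + a (p-1) * x (p-1)"
  by (cases p) (simp_all add: lin_def)

lemma lin_lincomb: "lin p a (\<lambda>j. u * x j + v * x' j) = u * lin p a x + v * lin p a x'"
  unfolding lin_def by (simp add: sum.distrib sum_distrib_left algebra_simps)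

lemma lin_cong: "(\<And>j. j < p \<Longrightarrow> x j = x' j) \<Longrightarrow> lin p a x = lin p a x'"
  unfolding lin_def by (rule sum.cong) auto

lemma sum_mult_le_max_abs_sum_abs:
  fixes a y :: "nat \<Rightarrow> real"
  assumes "\<And>i. i < n \<Longrightarrow> \<bar>a i\<bar> \<le> A"
  shows "(\<Sum>i<n. a i * y i) \<le> A * (\<Sum>i<n. \<bar>y i\<bar>)"
proof -
  have "(\<Sum>i<n. a i * y i) \<le> (\<Sum>i<n. A * \<bar>y i\<bar>)"
  proof (rule sum_mono)
    fix i assume "i \<in> {..<n}"
    then have "\<bar>a i\<bar> * \<bar>y i\<bar> \<le> A * \<bar>y i\<bar>" using assms by (simp add: mult_right_mono)
    then show "a i * y i \<le> A * \<bar>y i\<bar>" by (metis abs_ge_self abs_mult order_trans)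
  qed
  then show ?thesis by (simp add: sum_distrib_left)
qed

lemma sum_abs_le_iff_signed_sums_le:
  fixes w :: "nat \<Rightarrow> real"
  shows "(\<Sum>i<n. \<bar>w i\<bar>) \<le> R \<longleftrightarrow> (\<forall>S\<subseteq>{..<n}. (\<Sum>i<n. (if i \<in> S then 1 else -1) * w i) \<le> R)"
proof
  assume "(\<Sum>i<n. \<bar>w i\<bar>) \<le> R"
  moreover have "(\<Sum>i<n. (if i \<in> S then 1 else -1) * w i) \<le> (\<Sum>i<n. \<bar>w i\<bar>)" for S
    by (intro sum_mono) auto
  ultimately show "\<forall>S\<subseteq>{..<n}. (\<Sum>i<n. (if i \<in> S then 1 else -1) * w i) \<le> R"
    by (meson order_trans)
next
  assume signed: "\<forall>S\<subseteq>{..<n}. (\<Sum>i<n. (if i \<in> S then 1 else -1) * w i) \<le> R"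
  define S where "S = {i. i < n \<and> w i \<ge> 0}"
  have "(\<Sum>i<n. \<bar>w i\<bar>) = (\<Sum>i<n. (if i \<in> S then 1 else -1) * w i)"
    by (intro sum.cong) (auto simp: S_def)
  also have "\<dots> \<le> R"
    using signed[rule_format, of S] by (auto simp: S_def)
  finally show "(\<Sum>i<n. \<bar>w i\<bar>) \<le> R" .
qed

lemma mem_conv: "z \<in> S \<Longrightarrow> z \<in> conv S"
  unfolding conv_def
  by (intro CollectI exI[of _ 1] exI[of _ "\<lambda>_. 1"] exI[of _ "\<lambda>_. z"]) auto

lemma conv_lin_le:
  assumes S: "\<And>x y. (x, y) \<in> S \<Longrightarrow> lin p c x + lin q h y \<le> g" and z: "(x, y) \<in> conv S"
  shows "lin p c x + lin q h y \<le> g"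
proof -
  obtain m :: nat and w v where wv: "\<forall>i<m. w i \<ge> 0 \<and> v i \<in> S" and w1: "(\<Sum>i<m. w i) = 1"
    and xy: "(x, y) = ((\<lambda>j. \<Sum>i<m. w i * fst (v i) j), (\<lambda>j. \<Sum>i<m. w i * snd (v i) j))"
    using z unfolding conv_def by blast
  from xy have x: "x = (\<lambda>j. \<Sum>i<m. w i * fst (v i) j)" and y: "y = (\<lambda>j. \<Sum>i<m. w i * snd (v i) j)"
    by simp_all
  have lin_comb: "lin n a (\<lambda>j. \<Sum>i<m. w i * u i j) = (\<Sum>i<m. w i * lin n a (u i))" for n a u
    unfolding lin_def sum_distrib_left by (subst sum.swap) (simp add: ac_simps)
  have "lin p c x + lin q h y = (\<Sum>i<m. w i * (lin p c (fst (v i)) + lin q h (snd (v i))))"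
    unfolding x y lin_comb by (simp add: distrib_left sum.distrib)
  also have "\<dots> \<le> (\<Sum>i<m. w i * g)"
    using wv S by (intro sum_mono mult_left_mono) (auto simp: split_beta)
  also have "\<dots> = g" using w1 by (simp add: sum_distrib_right[symmetric])
  finally show ?thesis .
qed

section \<open>Disjunctive cuts\<close>

lemma k_disj_closure_subset: "k_disj_closure p q k C \<subseteq> C"
  unfolding k_disj_closure_def by auto

lemma mem_k_disj_closureI:
  assumes "(x, y) \<in> C" "\<And>\<alpha> \<beta> \<gamma>. k_disj_cut p q k C \<alpha> \<beta> \<gamma> \<Longrightarrow> lin p \<alpha> x + lin q \<beta> y \<le> \<gamma>"
  shows "(x, y) \<in> k_disj_closure p q k C"
  using assms unfolding k_disj_closure_def by auto

lemma k_disj_iter_0 [simp]: "k_disj_iter p q k 0 P = P"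
  by (simp add: k_disj_iter_def)

lemma k_disj_iter_Suc [simp]: "k_disj_iter p q k (Suc n) P = k_disj_closure p q k (k_disj_iter p q k n P)"
  by (simp add: k_disj_iter_def)

lemma k_disj_iter_subset: "k_disj_iter p q k n P \<subseteq> P"
  by (induction n) (simp_all add: order_trans[OF k_disj_closure_subset])

lemma k_disj_cutE:
  assumes "k_disj_cut p q k C \<alpha> \<beta> \<gamma>"
  obtains d \<delta> where "k_disjunction p k d \<delta>"
    "\<And>x y i. (x, y) \<in> C \<Longrightarrow> i < k \<Longrightarrow> lin p (\<lambda>j. of_int (d i j)) x \<le> of_int (\<delta> i) \<Longrightarrow>
       lin p \<alpha> x + lin q \<beta> y \<le> \<gamma>"
  using assms unfolding k_disj_cut_def lin_def by (fastforce simp: not_le[symmetric])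

lemma k_disjunction_integral:
  assumes "k_disjunction p k d \<delta>" "\<forall>j<p. x j \<in> \<int>"
  obtains i where "i < k" "lin p (\<lambda>j. of_int (d i j)) x \<le> of_int (\<delta> i)"
proof -
  have x: "of_int \<lfloor>x j\<rfloor> = x j" if "j < p" for j
    using assms(2) that by (metis Ints_cases floor_of_int)
  obtain i where "i < k" "(\<Sum>j<p. d i j * \<lfloor>x j\<rfloor>) \<le> \<delta> i"
    using assms(1)[unfolded k_disjunction_def, rule_format, of "\<lambda>j. \<lfloor>x j\<rfloor>"] by blast
  moreover have "lin p (\<lambda>j. of_int (d i j)) x = of_int (\<Sum>j<p. d i j * \<lfloor>x j\<rfloor>)"
    unfolding lin_def of_int_sum by (intro sum.cong) (simp_all add: x)
  ultimately show ?thesis using that by (metis of_int_le_iff)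
qed

lemma k_disjunction_pigeonhole:
  fixes v :: "'a \<Rightarrow> nat \<Rightarrow> real"
  assumes "k_disjunction p k d \<delta>" "finite A" "k < card A" "\<And>a j. a \<in> A \<Longrightarrow> j < p \<Longrightarrow> v a j \<in> \<int>"
  obtains a b i where "a \<in> A" "b \<in> A" "a \<noteq> b" "i < k"
    "lin p (\<lambda>j. of_int (d i j)) (v a) \<le> of_int (\<delta> i)"
    "lin p (\<lambda>j. of_int (d i j)) (v b) \<le> of_int (\<delta> i)"
proof -
  define f where "f a = (SOME i. i < k \<and> lin p (\<lambda>j. of_int (d i j)) (v a) \<le> of_int (\<delta> i))" for a
  have f: "f a < k \<and> lin p (\<lambda>j. of_int (d (f a) j)) (v a) \<le> of_int (\<delta> (f a))" if "a \<in> A" for a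
  proof -
    have "\<exists>i. i < k \<and> lin p (\<lambda>j. of_int (d i j)) (v a) \<le> of_int (\<delta> i)"
      using k_disjunction_integral[OF assms(1)] assms(4) that by metis
    then show ?thesis unfolding f_def by (rule someI_ex)
  qed
  have "\<not> inj_on f A"
  proof
    assume "inj_on f A"
    then have "card A \<le> card {..<k}" by (rule card_inj_on_le) (use f in auto)
    with assms(3) show False by simp
  qed
  then obtain a b where "a \<in> A" "b \<in> A" "a \<noteq> b" "f a = f b"
    unfolding inj_on_def by blast
  with f that show ?thesis by metis
qed

section \<open>The pyramid\<close>

definition apex :: "nat \<Rightarrow> nat \<Rightarrow> real" where
  "apex p = (\<lambda>j. if j < p-1 then 1/2 else if j = p-1 then 1 else 0)"

text \<open>\<open>Q = base p 1\<close>, and \<open>base p r\<close> is its image under the homothety of ratio \<open>r\<close> about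
  \<^const>\<open>apex\<close> (lemma \<open>mem_base_homothety\<close>); so \<open>pyramid p t\<close>, whose slice at height \<open>s\<close> is
  \<open>base p (1 - s/t)\<close>, is the pyramid over \<open>Q\<close> with apex \<open>(apex p, t)\<close>.\<close>

definition base :: "nat \<Rightarrow> real \<Rightarrow> (nat \<Rightarrow> real) set" where
  "base p r = {x. \<bar>x (p-1) - 1\<bar> \<le> r \<and>
     (\<Sum>i<p-1. \<bar>x i - x (p-1)/2\<bar>) \<le> r * ((real p - 1)/2) + (real p - 3) * (x (p-1) - 1)/2}"

definition height :: "real \<Rightarrow> nat \<Rightarrow> real" where
  "height s = (\<lambda>j. if j = 0 then s else 0)"

definition pyramid :: "nat \<Rightarrow> real \<Rightarrow> pt set" where
  "pyramid p t = {(x, y) \<in> space p 1. 0 \<le> y 0 \<and> x \<in> base p (1 - y 0 / t)}"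

lemma lin_height [simp]: "lin (Suc 0) \<beta> (height s) = \<beta> 0 * s"
  by (simp add: lin_def height_def)

lemma mem_pyramid_height:
  "(x, height s) \<in> pyramid p t \<longleftrightarrow> (\<forall>j\<ge>p. x j = 0) \<and> 0 \<le> s \<and> x \<in> base p (1 - s / t)"
  by (auto simp: pyramid_def space_def height_def)

lemma mem_base_homothety:
  assumes "0 < r"
  shows "x \<in> base p r \<longleftrightarrow> (\<lambda>j. apex p j + (x j - apex p j) / r) \<in> base p 1"
proof -
  define x' where "x' = (\<lambda>j. apex p j + (x j - apex p j) / r)"
  have top: "x' (p-1) - 1 = (x (p-1) - 1) / r"
    by (simp add: x'_def apex_def)
  have "x' i - x' (p-1)/2 = (x i - x (p-1)/2) / r" if "i < p-1" for i
    using that assms by (simp add: x'_def apex_def field_simps)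
  then have sum: "(\<Sum>i<p-1. \<bar>x' i - x' (p-1)/2\<bar>) = (\<Sum>i<p-1. \<bar>x i - x (p-1)/2\<bar>) / r"
    unfolding sum_divide_distrib using assms by (intro sum.cong) (auto simp: abs_divide)
  show ?thesis
    unfolding x'_def[symmetric] base_def mem_Collect_eq sum top
    using assms by (simp add: abs_divide field_simps)
qed

lemma base_mono:
  assumes "r \<le> r'" "1 \<le> p"
  shows "base p r \<subseteq> base p r'"
proof
  fix x assume "x \<in> base p r"
  moreover have "r * ((real p - 1)/2) \<le> r' * ((real p - 1)/2)"
    using assms by (intro mult_right_mono) auto
  ultimately show "x \<in> base p r'"
    using assms(1) unfolding base_def mem_Collect_eq by linarith
qed

lemma base_zero: "x \<in> base p 0 \<Longrightarrow> j < p \<Longrightarrow> x j = apex p j"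
proof -
  assume x: "x \<in> base p 0" and j: "j < p"
  then have top: "x (p-1) = 1" and "(\<Sum>i<p-1. \<bar>x i - x (p-1)/2\<bar>) \<le> 0"
    by (auto simp: base_def)
  then have "\<forall>i\<in>{..<p-1}. \<bar>x i - x (p-1)/2\<bar> = 0"
    by (subst sum_nonneg_eq_0_iff[symmetric]) (auto intro: antisym sum_nonneg)
  with top j show ?thesis by (auto simp: apex_def)
qed

lemma pyramid_mono:
  assumes "0 < s" "s \<le> t" "1 \<le> p"
  shows "pyramid p s \<subseteq> pyramid p t"
proof (rule subrelI)
  fix x y assume xy: "(x, y) \<in> pyramid p s"
  then have "y 0 / t \<le> y 0 / s" using assms by (intro divide_left_mono) (auto simp: pyramid_def)
  then have "base p (1 - y 0 / s) \<subseteq> base p (1 - y 0 / t)" using assms by (intro base_mono) auto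
  with xy show "(x, y) \<in> pyramid p t" by (auto simp: pyramid_def)
qed

lemma pyramid_height_le:
  assumes "(x, y) \<in> pyramid p t" "0 < t"
  shows "y 0 \<le> t"
proof -
  have "\<bar>x (p-1) - 1\<bar> \<le> 1 - y 0 / t" using assms(1) by (auto simp: pyramid_def base_def)
  then have "y 0 / t \<le> 1" by linarith
  with assms(2) show ?thesis by (simp add: divide_le_eq)
qed

lemma apex_mem_pyramid: "1 \<le> p \<Longrightarrow> 0 < t \<Longrightarrow> (apex p, height t) \<in> pyramid p t"
  by (auto simp: mem_pyramid_height base_def apex_def)

lemma integral_mem_base_ge_1:
  assumes "2 \<le> p" "x \<in> base p r" "\<forall>j<p. x j \<in> \<int>"
  shows "1 \<le> r"
proof (rule ccontr)
  assume "\<not> 1 \<le> r"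
  have top: "\<bar>x (p-1) - 1\<bar> \<le> r"
    and sum: "(\<Sum>i<p-1. \<bar>x i - x (p-1)/2\<bar>) \<le> r * ((real p - 1)/2) + (real p - 3) * (x (p-1) - 1)/2"
    using assms(2) by (auto simp: base_def)
  have "x (p-1) \<in> \<int>" using assms by simp
  then obtain n where "x (p-1) = of_int n" by (elim Ints_cases)
  with top \<open>\<not> 1 \<le> r\<close> have "x (p-1) = 1" by simp
  have "(\<Sum>i<p-1. (1/2::real)) \<le> (\<Sum>i<p-1. \<bar>x i - x (p-1)/2\<bar>)"
  proof (rule sum_mono)
    fix i assume "i \<in> {..<p-1}"
    then have "x i \<in> \<int>" using assms(3) by simp
    then obtain k where "x i = of_int k" by (elim Ints_cases)
    then show "1/2 \<le> \<bar>x i - x (p-1)/2\<bar>"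
      using \<open>x (p-1) = 1\<close> by (cases "k \<le> 0") (auto simp: abs_if)
  qed
  with sum \<open>x (p-1) = 1\<close> assms(1) have "(real p - 1)/2 \<le> r * ((real p - 1)/2)"
    by (simp add: of_nat_diff)
  moreover have "r * ((real p - 1)/2) < 1 * ((real p - 1)/2)"
    using \<open>\<not> 1 \<le> r\<close> assms(1) by (intro mult_strict_right_mono) auto
  ultimately show False by simp
qed

lemma lin_le_on_base:
  assumes p: "1 \<le> p" and x: "x \<in> base p 1"
    and A: "0 \<le> A" "\<And>j. j < p-1 \<Longrightarrow> \<bar>\<alpha> j\<bar> \<le> A"
  shows "lin p \<alpha> x \<le> (1 - x (p-1)/2) * A
    + (x (p-1)/2) * ((\<Sum>j<p-1. \<alpha> j) + (real p - 2) * A + 2 * \<alpha> (p-1))"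
proof -
  define z where "z = x (p-1)"
  have dev: "(\<Sum>j<p-1. \<bar>x j - z/2\<bar>) \<le> 1 + (real p - 3) * z / 2"
    using x by (auto simp: base_def z_def field_simps)
  have "lin p \<alpha> x = (\<Sum>j<p-1. \<alpha> j) * (z/2) + (\<Sum>j<p-1. \<alpha> j * (x j - z/2)) + \<alpha> (p-1) * z"
    using p by (simp add: lin_split_last z_def right_diff_distrib sum_subtractf sum_distrib_right)
  also have "(\<Sum>j<p-1. \<alpha> j * (x j - z/2)) \<le> A * (\<Sum>j<p-1. \<bar>x j - z/2\<bar>)"
    by (rule sum_mult_le_max_abs_sum_abs) (rule A(2))
  also have "\<dots> \<le> A * (1 + (real p - 3) * z / 2)"
    using dev A(1) by (rule mult_left_mono)
  finally show ?thesis unfolding z_def[symmetric] by (simp add: field_simps)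
qed

lemma lin_le_on_base_of_integral_points:
  assumes p: "3 \<le> p" and x: "x \<in> base p 1"
    and integral: "\<And>v. \<forall>j\<ge>p. v j = 0 \<Longrightarrow> v \<in> base p 1 \<Longrightarrow> \<forall>j<p. v j \<in> \<int> \<Longrightarrow> lin p \<alpha> v \<le> \<gamma>"
  shows "lin p \<alpha> x \<le> \<gamma>"
proof -
  define A where "A = Max ((\<lambda>j. \<bar>\<alpha> j\<bar>) ` {..<p-1})"
  have A_ge: "\<bar>\<alpha> j\<bar> \<le> A" if "j < p-1" for j
    using that unfolding A_def by (intro Max_ge) auto
  have "A \<in> (\<lambda>j. \<bar>\<alpha> j\<bar>) ` {..<p-1}"
    unfolding A_def using p by (intro Max_in) (auto simp: lessThan_empty_iff)
  then obtain i where i: "i < p-1" "\<bar>\<alpha> i\<bar> = A" by auto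
  define \<sigma> :: real where "\<sigma> = (if \<alpha> i \<ge> 0 then 1 else -1)"
  have \<sigma>: "\<sigma> * \<alpha> i = A" "\<bar>\<sigma>\<bar> = 1" "\<sigma> \<in> \<int>" using i by (auto simp: \<sigma>_def)
  txt \<open>The bound of \<open>lin_le_on_base\<close> interpolates the values at two integral points of the base,
    on its slices \<open>x (p-1) = 0\<close> and \<open>x (p-1) = 2\<close>.\<close>
  define v0 where "v0 = (\<lambda>j. if j = i then \<sigma> else 0)"
  define v2 where "v2 = (\<lambda>j. if j < p-1 then 1 + (if j = i then \<sigma> * (real p - 2) else 0)
                          else if j = p-1 then 2 else 0)"
  have sum_v0: "(\<Sum>j<p-1. \<bar>v0 j - v0 (p-1)/2\<bar>) = 1"
    using i \<sigma> by (simp add: v0_def if_distrib[of abs] sum.delta cong: if_cong)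
  have sum_v2: "(\<Sum>j<p-1. \<bar>v2 j - v2 (p-1)/2\<bar>) = real p - 2"
    using i \<sigma> p by (simp add: v2_def if_distrib[of abs] sum.delta abs_mult cong: if_cong)
  have top: "v0 (p-1) = 0" "v2 (p-1) = 2" using i by (auto simp: v0_def v2_def)
  have "v0 \<in> base p 1" "v2 \<in> base p 1"
    unfolding base_def mem_Collect_eq sum_v0 sum_v2 unfolding top by (simp_all add: field_simps)
  then have le_v0: "lin p \<alpha> v0 \<le> \<gamma>" and le_v2: "lin p \<alpha> v2 \<le> \<gamma>"
    using i p \<sigma> by (auto intro!: integral simp: v0_def v2_def)
  have lin_v0: "lin p \<alpha> v0 = A"
    using i p \<sigma> by (simp add: lin_split_last v0_def if_distrib[of "\<lambda>v. _ * v"] sum.delta mult.commute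
        cong: if_cong)
  have lin_v2: "lin p \<alpha> v2 = (\<Sum>j<p-1. \<alpha> j) + (real p - 2) * A + 2 * \<alpha> (p-1)"
    using i(1) p by (simp add: lin_split_last v2_def distrib_left if_distrib[of "\<lambda>v. _ * v"] sum.distrib
        sum.delta \<sigma>(1)[symmetric] algebra_simps cong: if_cong)
  have z: "0 \<le> x (p-1)" "x (p-1) \<le> 2" using x by (auto simp: base_def)
  have "lin p \<alpha> x \<le> (1 - x (p-1)/2) * lin p \<alpha> v0 + (x (p-1)/2) * lin p \<alpha> v2"
    unfolding lin_v0 lin_v2 using p x A_ge i by (intro lin_le_on_base) auto
  also have "\<dots> \<le> (1 - x (p-1)/2) * \<gamma> + (x (p-1)/2) * \<gamma>"
    using z le_v0 le_v2 by (intro add_mono mult_left_mono) auto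
  finally show ?thesis by (simp add: algebra_simps)
qed

lemma pyramid_integral_height_le_0:
  assumes "2 \<le> p" "(x, y) \<in> pyramid p 1" "\<forall>j<p. x j \<in> \<int>"
  shows "y 0 \<le> 0"
  using integral_mem_base_ge_1[OF assms(1) _ assms(3), of "1 - y 0"] assms(2)
  by (simp add: pyramid_def)

section \<open>Midpoints of corners of the base\<close>

definition corner :: "nat \<Rightarrow> nat set + bool \<Rightarrow> nat \<Rightarrow> real" where
  "corner p a = (case a of
      Inl S \<Rightarrow> (\<lambda>j. if j < p-1 then (if j \<in> S then 1 else 0) else if j = p-1 then 1 else 0)
    | Inr b \<Rightarrow> (\<lambda>j. if b then (if j < p-1 then 1 else if j = p-1 then 2 else 0) else 0))"

definition corners :: "nat \<Rightarrow> (nat set + bool) set" where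
  "corners p = Inl ` Pow {..<p-1} \<union> range Inr"

lemma finite_corners: "finite (corners p)"
  by (simp add: corners_def)

lemma card_corners: "card (corners p) = 2^(p-1) + 2"
proof -
  have "card (Inl ` Pow {..<p-1} :: (nat set + bool) set) = 2^(p-1)"
    by (simp add: card_image card_Pow)
  moreover have "card (range Inr :: (nat set + bool) set) = 2"
    by (simp add: card_image)
  ultimately show ?thesis
    unfolding corners_def by (subst card_Un_disjoint) auto
qed

lemma corner_integral: "corner p a j \<in> \<int>"
  by (cases a) (auto simp: corner_def)

lemma corner_outside: "1 \<le> p \<Longrightarrow> p \<le> j \<Longrightarrow> corner p a j = 0"
  by (cases a) (auto simp: corner_def)

definition core :: "nat \<Rightarrow> (nat \<Rightarrow> real) set" where
  "core p = {x. \<bar>x (p-1) - 1\<bar> \<le> 1/2 \<and>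
     (\<Sum>i<p-1. \<bar>x i - x (p-1)/2\<bar>) \<le> (real p - 2)/2 - (real p - 3) * \<bar>x (p-1) - 1\<bar>/2}"

lemma core_subset_base:
  assumes "3 \<le> p"
  shows "core p \<subseteq> base p ((real p - 2) / (real p - 1))"
proof
  fix x assume x: "x \<in> core p"
  have "1/2 \<le> (real p - 2) / (real p - 1)" using assms by (simp add: field_simps)
  moreover have "(real p - 2) / (real p - 1) * ((real p - 1) / 2) = (real p - 2) / 2"
    using assms by simp
  moreover have "(real p - 3) * (- \<bar>x (p-1) - 1\<bar>) \<le> (real p - 3) * (x (p-1) - 1)"
    using assms by (intro mult_left_mono) auto
  then have "- ((real p - 3) * \<bar>x (p-1) - 1\<bar>) \<le> (real p - 3) * (x (p-1) - 1)"
    unfolding mult_minus_right .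
  ultimately show "x \<in> base p ((real p - 2) / (real p - 1))"
    using x unfolding core_def base_def mem_Collect_eq by linarith
qed

lemma core_reflect: "x \<in> core p \<Longrightarrow> (\<lambda>j. 2 * apex p j - x j) \<in> core p"
proof -
  assume x: "x \<in> core p"
  have "2 * apex p i - x i - (2 * apex p (p-1) - x (p-1))/2 = - (x i - x (p-1)/2)" if "i < p-1" for i
    using that by (simp add: apex_def field_simps)
  then have "\<bar>2 * apex p i - x i - (2 * apex p (p-1) - x (p-1))/2\<bar> = \<bar>x i - x (p-1)/2\<bar>"
    if "i < p-1" for i
    using that by (metis abs_minus_cancel)
  then have "(\<Sum>i<p-1. \<bar>2 * apex p i - x i - (2 * apex p (p-1) - x (p-1))/2\<bar>) =
      (\<Sum>i<p-1. \<bar>x i - x (p-1)/2\<bar>)"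
    by (intro sum.cong) auto
  moreover have "\<bar>2 * apex p (p-1) - x (p-1) - 1\<bar> = \<bar>x (p-1) - 1\<bar>"
    by (simp add: apex_def abs_minus_commute)
  ultimately show ?thesis using x by (simp add: core_def)
qed

lemma core_reflect_mem_base:
  assumes "3 \<le> p" "x \<in> core p"
  shows "(\<lambda>j. 2 * apex p j - x j) \<in> base p 1"
proof -
  have "base p ((real p - 2) / (real p - 1)) \<subseteq> base p 1" using assms by (intro base_mono) auto
  with core_subset_base[OF assms(1)] core_reflect[OF assms(2)] show ?thesis by blast
qed

lemma core_lift_mem_pyramid:
  assumes p: "3 \<le> p" and t: "0 < t" and x: "x \<in> core p" "\<forall>j\<ge>p. x j = 0"
  shows "(x, height (t / (real p - 1))) \<in> pyramid p t"
proof -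
  have "1 - t / (real p - 1) / t = (real p - 2) / (real p - 1)" using p t by (simp add: field_simps)
  with x core_subset_base[OF p] p t show ?thesis by (auto simp: mem_pyramid_height)
qed

lemma corner_midpoint_Inl_Inl_in_core:
  assumes p: "3 \<le> p" and ST: "S \<subseteq> {..<p-1}" "T \<subseteq> {..<p-1}" "S \<noteq> T"
  shows "(\<lambda>j. corner p (Inl S) j / 2 + corner p (Inl T) j / 2) \<in> core p" (is "?m \<in> _")
proof -
  obtain i0 where i0: "i0 < p-1" "(i0 \<in> S) \<noteq> (i0 \<in> T)" using ST by blast
  have top: "?m (p-1) = 1" by (simp add: corner_def)
  have dev: "\<bar>?m i - ?m (p-1)/2\<bar> = (if (i \<in> S) = (i \<in> T) then 1/2 else 0)" if "i < p-1" for i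
    using that by (auto simp: corner_def)
  have "(\<Sum>i<p-1. \<bar>?m i - ?m (p-1)/2\<bar>) =
      \<bar>?m i0 - ?m (p-1)/2\<bar> + (\<Sum>i\<in>{..<p-1}-{i0}. \<bar>?m i - ?m (p-1)/2\<bar>)"
    using i0 by (subst sum.remove[of _ i0]) auto
  also have "\<dots> \<le> 0 + (\<Sum>i\<in>{..<p-1}-{i0}. 1/2)"
    using i0 dev by (intro add_mono sum_mono) auto
  also have "\<dots> = (real p - 2)/2" using i0 p by (simp add: of_nat_diff)
  finally show ?thesis using top unfolding core_def by simp
qed

lemma corner_midpoint_Inl_Inr_in_core:
  assumes p: "3 \<le> p"
  shows "(\<lambda>j. corner p (Inl S) j / 2 + corner p (Inr c) j / 2) \<in> core p" (is "?m \<in> _")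
proof -
  have top: "?m (p-1) = (if c then 3/2 else 1/2)" by (simp add: corner_def)
  have "\<bar>?m i - ?m (p-1)/2\<bar> = 1/4" if "i < p-1" for i
    using that by (auto simp: corner_def)
  then have "(\<Sum>i<p-1. \<bar>?m i - ?m (p-1)/2\<bar>) = (\<Sum>i<p-1. 1/4)" by (intro sum.cong) auto
  also have "\<dots> = (real p - 1)/4" using p by (simp add: of_nat_diff)
  finally have dev: "(\<Sum>i<p-1. \<bar>?m i - ?m (p-1)/2\<bar>) = (real p - 1)/4" .
  show ?thesis unfolding core_def mem_Collect_eq dev unfolding top
    using p by (cases c) (simp_all add: field_simps)
qed

lemma corner_midpoint_Inr_Inr_in_core:
  assumes "3 \<le> p" "c \<noteq> c'"
  shows "(\<lambda>j. corner p (Inr c) j / 2 + corner p (Inr c') j / 2) \<in> core p" (is "?m \<in> _")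
proof -
  have "?m (p-1) = 1" "(\<Sum>i<p-1. \<bar>?m i - ?m (p-1)/2\<bar>) = 0"
    using assms(2) by (auto simp: corner_def intro!: sum.neutral)
  with assms(1) show ?thesis unfolding core_def by simp
qed

lemma corner_midpoint_in_core:
  assumes p: "3 \<le> p" and ab: "a \<in> corners p" "b \<in> corners p" "a \<noteq> b"
  shows "(\<lambda>j. corner p a j / 2 + corner p b j / 2) \<in> core p"
proof -
  have swap: "(\<lambda>j. corner p a j / 2 + corner p b j / 2) = (\<lambda>j. corner p b j / 2 + corner p a j / 2)"
    by (simp add: add.commute)
  consider (ll) S T where "a = Inl S" "b = Inl T" | (lr) S c where "a = Inl S" "b = Inr c"
    | (rl) c S where "a = Inr c" "b = Inl S" | (rr) c c' where "a = Inr c" "b = Inr c'"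
    by (cases a; cases b) auto
  then show ?thesis
  proof cases
    case ll
    then have "S \<subseteq> {..<p-1}" "T \<subseteq> {..<p-1}" "S \<noteq> T" using ab by (auto simp: corners_def)
    with ll p show ?thesis by (simp add: corner_midpoint_Inl_Inl_in_core)
  next
    case lr
    with p show ?thesis by (simp add: corner_midpoint_Inl_Inr_in_core)
  next
    case rl
    with p show ?thesis by (subst swap) (simp add: corner_midpoint_Inl_Inr_in_core)
  next
    case rr
    with ab p show ?thesis by (simp add: corner_midpoint_Inr_Inr_in_core)
  qed
qed

section \<open>One round of the disjunctive closure\<close>

lemma pyramid_cut_le_on_base:
  assumes p: "3 \<le> p" and sub: "pyramid p t \<subseteq> C" and cut: "k_disj_cut p 1 k C \<alpha> \<beta> \<gamma>"
    and x: "x \<in> base p 1"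
  shows "lin p \<alpha> x \<le> \<gamma>"
proof -
  obtain d \<delta> where disj: "k_disjunction p k d \<delta>"
    and sat: "\<And>x y i. (x, y) \<in> C \<Longrightarrow> i < k \<Longrightarrow> lin p (\<lambda>j. of_int (d i j)) x \<le> of_int (\<delta> i) \<Longrightarrow>
       lin p \<alpha> x + lin 1 \<beta> y \<le> \<gamma>"
    using k_disj_cutE[OF cut] by blast
  show ?thesis
  proof (rule lin_le_on_base_of_integral_points[OF p x])
    fix v assume v: "\<forall>j\<ge>p. v j = 0" "v \<in> base p 1" "\<forall>j<p. v j \<in> \<int>"
    then have "(v, height 0) \<in> C" using sub by (auto simp: mem_pyramid_height)
    moreover obtain i where "i < k" "lin p (\<lambda>j. of_int (d i j)) v \<le> of_int (\<delta> i)"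
      using k_disjunction_integral[OF disj v(3)] by blast
    ultimately have "lin p \<alpha> v + lin 1 \<beta> (height 0) \<le> \<gamma>" by (rule sat)
    then show "lin p \<alpha> v \<le> \<gamma>" by simp
  qed
qed

text \<open>Two of the \<open>2^(p-1) + 2\<close> corners satisfy the same term of the disjunction, hence so does
  their midpoint \<open>m\<close>, which lifts to height \<open>t/(p-1)\<close> in the pyramid. The reflection of \<open>m\<close> in
  the apex lies in the base, and the apex at height \<open>t/(2(p-1))\<close> is the average of the two.\<close>
lemma pyramid_cut_le_at_apex:
  assumes p: "3 \<le> p" and t: "0 < t" and sub: "pyramid p t \<subseteq> C"
    and cut: "k_disj_cut p 1 (2^(p-1)+1) C \<alpha> \<beta> \<gamma>"
  shows "lin p \<alpha> (apex p) + \<beta> 0 * (t / (2 * (real p - 1))) \<le> \<gamma>"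
proof -
  obtain d \<delta> where disj: "k_disjunction p (2^(p-1)+1) d \<delta>"
    and sat: "\<And>x y i. (x, y) \<in> C \<Longrightarrow> i < 2^(p-1)+1 \<Longrightarrow>
       lin p (\<lambda>j. of_int (d i j)) x \<le> of_int (\<delta> i) \<Longrightarrow> lin p \<alpha> x + lin 1 \<beta> y \<le> \<gamma>"
    using k_disj_cutE[OF cut] by blast
  have "2^(p-1)+1 < card (corners p)" by (simp add: card_corners)
  then obtain a b i where ab: "a \<in> corners p" "b \<in> corners p" "a \<noteq> b" and i: "i < 2^(p-1)+1"
    and da: "lin p (\<lambda>j. of_int (d i j)) (corner p a) \<le> of_int (\<delta> i)"
    and db: "lin p (\<lambda>j. of_int (d i j)) (corner p b) \<le> of_int (\<delta> i)"
    by (rule k_disjunction_pigeonhole[OF disj finite_corners _ corner_integral])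
  define m where "m = (\<lambda>j. corner p a j / 2 + corner p b j / 2)"
  have m_core: "m \<in> core p" unfolding m_def by (rule corner_midpoint_in_core[OF p ab])
  have m_sat: "lin p (\<lambda>j. of_int (d i j)) m \<le> of_int (\<delta> i)"
    using lin_lincomb[of p _ "1/2" "corner p a" "1/2" "corner p b"] da db by (simp add: m_def)
  have "(m, height (t / (real p - 1))) \<in> C"
    using core_lift_mem_pyramid[OF p t m_core] sub p by (auto simp: m_def corner_outside)
  then have "lin p \<alpha> m + lin 1 \<beta> (height (t / (real p - 1))) \<le> \<gamma>"
    using sat[OF _ i m_sat] by blast
  moreover have "t / (real p - 1) = 2 * (t / (2 * (real p - 1)))" using p by (simp add: field_simps)
  ultimately have lifted: "lin p \<alpha> m + 2 * (\<beta> 0 * (t / (2 * (real p - 1)))) \<le> \<gamma>"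
    by (simp only: lin_height One_nat_def mult.left_commute)
  have reflected: "lin p \<alpha> (\<lambda>j. 2 * apex p j - m j) \<le> \<gamma>"
    using core_reflect_mem_base[OF p m_core] by (rule pyramid_cut_le_on_base[OF p sub cut])
  have "apex p = (\<lambda>j. (1/2) * (2 * apex p j - m j) + (1/2) * m j)" by (simp add: field_simps)
  then have "lin p \<alpha> (apex p) = (1/2) * lin p \<alpha> (\<lambda>j. 2 * apex p j - m j) + (1/2) * lin p \<alpha> m"
    by (metis lin_lincomb)
  with lifted reflected show ?thesis by linarith
qed

lemma pyramid_lin_le:
  assumes s: "0 < s" and at_apex: "lin p \<alpha> (apex p) + \<beta> 0 * s \<le> \<gamma>"
    and on_base: "\<And>x. x \<in> base p 1 \<Longrightarrow> lin p \<alpha> x \<le> \<gamma>" and xy: "(x, y) \<in> pyramid p s"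
  shows "lin p \<alpha> x + lin 1 \<beta> y \<le> \<gamma>"
proof -
  define \<rho> where "\<rho> = 1 - y 0 / s"
  have x: "x \<in> base p \<rho>" and y: "y 0 = (1 - \<rho>) * s" "y = height (y 0)"
    using xy s by (auto simp: pyramid_def space_def height_def \<rho>_def)
  have "\<bar>x (p-1) - 1\<bar> \<le> \<rho>" using x by (simp add: base_def)
  then have "0 \<le> \<rho>" by (meson abs_ge_zero order_trans)
  moreover have "\<rho> \<le> 1" using xy s by (simp add: pyramid_def \<rho>_def)
  ultimately have \<rho>: "0 \<le> \<rho>" "\<rho> \<le> 1" by auto
  have lin_y: "lin 1 \<beta> y = (1 - \<rho>) * (\<beta> 0 * s)" by (subst y(2)) (simp add: y(1))
  show ?thesis
  proof (cases "\<rho> = 0")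
    case True
    then have "lin p \<alpha> x = lin p \<alpha> (apex p)" using x by (auto intro: lin_cong base_zero)
    with at_apex True lin_y show ?thesis by simp
  next
    case False
    define x' where "x' = (\<lambda>j. apex p j + (x j - apex p j) / \<rho>)"
    have "x' \<in> base p 1" using x False \<rho> mem_base_homothety[of \<rho>] by (simp add: x'_def)
    then have "lin p \<alpha> x' \<le> \<gamma>" by (rule on_base)
    have "x = (\<lambda>j. (1 - \<rho>) * apex p j + \<rho> * x' j)" using False by (auto simp: x'_def field_simps)
    then have "lin p \<alpha> x = (1 - \<rho>) * lin p \<alpha> (apex p) + \<rho> * lin p \<alpha> x'" by (metis lin_lincomb)
    then have "lin p \<alpha> x + lin 1 \<beta> y = (1 - \<rho>) * (lin p \<alpha> (apex p) + \<beta> 0 * s) + \<rho> * lin p \<alpha> x'"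
      unfolding lin_y by (simp add: algebra_simps)
    also have "\<dots> \<le> (1 - \<rho>) * \<gamma> + \<rho> * \<gamma>"
      using at_apex \<open>lin p \<alpha> x' \<le> \<gamma>\<close> \<rho> by (intro add_mono mult_left_mono) auto
    finally show ?thesis by (simp add: algebra_simps)
  qed
qed

lemma pyramid_subset_k_disj_closure:
  assumes p: "3 \<le> p" and t: "0 < t" and sub: "pyramid p t \<subseteq> C"
  shows "pyramid p (t / (2 * (real p - 1))) \<subseteq> k_disj_closure p 1 (2^(p-1)+1) C"
proof (rule subrelI)
  fix x y assume xy: "(x, y) \<in> pyramid p (t / (2 * (real p - 1)))"
  have s: "0 < t / (2 * (real p - 1))" "t / (2 * (real p - 1)) \<le> t" using p t by (auto simp: field_simps)
  show "(x, y) \<in> k_disj_closure p 1 (2^(p-1)+1) C"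
  proof (rule mem_k_disj_closureI)
    show "(x, y) \<in> C" using xy pyramid_mono[OF s, of p] p sub by auto
    fix \<alpha> \<beta> \<gamma> assume cut: "k_disj_cut p 1 (2^(p-1)+1) C \<alpha> \<beta> \<gamma>"
    show "lin p \<alpha> x + lin 1 \<beta> y \<le> \<gamma>"
    proof (rule pyramid_lin_le[OF s(1) _ _ xy])
      show "lin p \<alpha> (apex p) + \<beta> 0 * (t / (2 * (real p - 1))) \<le> \<gamma>"
        by (rule pyramid_cut_le_at_apex[OF p t sub cut])
      show "lin p \<alpha> x \<le> \<gamma>" if "x \<in> base p 1" for x
        by (rule pyramid_cut_le_on_base[OF p sub cut that])
    qed
  qed
qed

lemma pyramid_subset_k_disj_iter:
  assumes p: "3 \<le> p"
  shows "pyramid p ((1 / (2 * (real p - 1))) ^ n) \<subseteq> k_disj_iter p 1 (2^(p-1)+1) n (pyramid p 1)"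
proof (induction n)
  case (Suc n)
  have "0 < (1 / (2 * (real p - 1))) ^ n" using p by simp
  from pyramid_subset_k_disj_closure[OF p this Suc.IH] show ?case by (simp add: field_simps)
qed simp

section \<open>Inequality description\<close>

lemma pyramid_bounded:
  assumes p: "3 \<le> p" and xy: "(x, y) \<in> pyramid p 1"
  shows "\<forall>i<p. \<bar>x i\<bar> \<le> real p" "\<bar>y 0\<bar> \<le> real p"
proof -
  have y: "0 \<le> y 0" and top: "\<bar>x (p-1) - 1\<bar> \<le> 1 - y 0"
    and dev: "(\<Sum>i<p-1. \<bar>x i - x (p-1)/2\<bar>) \<le> (1 - y 0) * ((real p - 1)/2) + (real p - 3) * (x (p-1) - 1)/2"
    using xy by (auto simp: pyramid_def base_def)
  have "(1 - y 0) * ((real p - 1)/2) \<le> (real p - 1)/2"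
    using y p by (simp add: mult_left_le_one_le)
  moreover have "(real p - 3) * (x (p-1) - 1) \<le> (real p - 3) * 1"
    using top y p by (intro mult_left_mono) auto
  ultimately have dev_le: "(\<Sum>i<p-1. \<bar>x i - x (p-1)/2\<bar>) \<le> real p - 2"
    using dev by (simp add: field_simps)
  show "\<forall>i<p. \<bar>x i\<bar> \<le> real p"
  proof (intro allI impI)
    fix i assume "i < p"
    show "\<bar>x i\<bar> \<le> real p"
    proof (cases "i < p - 1")
      case True
      then have "\<bar>x i - x (p-1)/2\<bar> \<le> (\<Sum>i<p-1. \<bar>x i - x (p-1)/2\<bar>)"
        by (intro member_le_sum) auto
      with dev_le top y show ?thesis by linarith
    next
      case False
      with \<open>i < p\<close> have "i = p - 1" by simp
      moreover have "\<bar>x (p-1)\<bar> \<le> real p" using top y p by linarith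
      ultimately show ?thesis by simp
    qed
  qed
  show "\<bar>y 0\<bar> \<le> real p" using top y p by linarith
qed

text \<open>The pyramid in inequality form: \<open>y \<ge> 0\<close>, \<open>\<bar>x (p-1) - 1\<bar> \<le> 1 - y\<close>, and one inequality
  for each sign pattern \<open>S\<close> of the sum of absolute values in the definition of \<^const>\<open>base\<close>.\<close>
definition facet :: "nat \<Rightarrow> nat set \<Rightarrow> (nat \<Rightarrow> real) \<times> (nat \<Rightarrow> real) \<times> real" where
  "facet p S =
     ((\<lambda>j. if j < p-1 then (if j \<in> S then 1 else -1)
           else if j = p-1 then - (\<Sum>i<p-1. if i \<in> S then 1 else -1)/2 - (real p - 3)/2 else 0),
      (\<lambda>_. (real p - 1)/2), 1)"

definition facets :: "nat \<Rightarrow> ((nat \<Rightarrow> real) \<times> (nat \<Rightarrow> real) \<times> real) list" where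
  "facets p =
     [((\<lambda>_. 0), (\<lambda>_. -1), 0), ((\<lambda>j. if j = p-1 then 1 else 0), (\<lambda>_. 1), 2),
      ((\<lambda>j. if j = p-1 then -1 else 0), (\<lambda>_. 1), 0)] @ map (\<lambda>l. facet p (set l)) (subseqs [0..<p-1])"

lemma set_facets:
  "set (facets p) = {((\<lambda>_. 0), (\<lambda>_. -1), 0), ((\<lambda>j. if j = p-1 then 1 else 0), (\<lambda>_. 1), 2),
      ((\<lambda>j. if j = p-1 then -1 else 0), (\<lambda>_. 1), 0)} \<union> facet p ` Pow {..<p-1}"
proof -
  have "set (map (\<lambda>l. facet p (set l)) (subseqs [0..<p-1])) = facet p ` set ` set (subseqs [0..<p-1])"
    by (simp add: image_image)
  also have "\<dots> = facet p ` Pow {..<p-1}" by (simp add: subseqs_powset atLeast0LessThan)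
  finally show ?thesis unfolding facets_def by simp
qed

lemma lin_facet_le_iff:
  assumes "1 \<le> p"
  shows "lin p (fst (facet p S)) x + lin 1 (fst (snd (facet p S))) y \<le> snd (snd (facet p S)) \<longleftrightarrow>
    (\<Sum>i<p-1. (if i \<in> S then 1 else -1) * (x i - x (p-1)/2))
      \<le> (1 - y 0) * ((real p - 1)/2) + (real p - 3) * (x (p-1) - 1)/2"
proof -
  have lin_x: "lin p (fst (facet p S)) x = (\<Sum>i<p-1. (if i \<in> S then 1 else -1) * x i)
      + (- (\<Sum>i<p-1. if i \<in> S then 1 else -1)/2 - (real p - 3)/2) * x (p-1)"
    using assms by (subst lin_split_last) (auto simp: facet_def intro!: sum.cong)
  have lin_y: "lin 1 (fst (snd (facet p S))) y = (real p - 1)/2 * y 0"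
    by (simp add: facet_def lin_def)
  have centred: "(\<Sum>i<p-1. (if i \<in> S then 1 else -1) * (x i - x (p-1)/2)) =
      (\<Sum>i<p-1. (if i \<in> S then 1 else -1) * x i) - (\<Sum>i<p-1. if i \<in> S then 1 else -1) * (x (p-1)/2)"
    by (simp add: right_diff_distrib sum_subtractf sum_distrib_right)
  have "snd (snd (facet p S)) = 1" by (simp add: facet_def)
  moreover have "(- (\<Sum>i<p-1. if i \<in> S then 1 else -1)/2 - (real p - 3)/2) * x (p-1) + (real p - 1)/2 * y 0 - 1
      = - (\<Sum>i<p-1. if i \<in> S then 1 else -1) * (x (p-1)/2)
        - ((1 - y 0) * ((real p - 1)/2) + (real p - 3) * (x (p-1) - 1)/2)"
    by (simp add: field_simps)
  ultimately show ?thesis unfolding lin_x lin_y centred by linarith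
qed

lemma mem_pyramid_iff_facets:
  assumes p: "1 \<le> p" and xy: "(x, y) \<in> space p 1"
  shows "(x, y) \<in> pyramid p 1 \<longleftrightarrow> (\<forall>(ax, ay, b) \<in> set (facets p). lin p ax x + lin 1 ay y \<le> b)"
proof -
  have unit: "lin p (\<lambda>j. if j = p-1 then c else 0) x = c * x (p-1)" for c
    unfolding lin_def using p by (simp add: if_distrib[of "\<lambda>v. v * _"] sum.delta cong: if_cong)
  have signed: "(\<forall>S\<in>Pow {..<p-1}.
        lin p (fst (facet p S)) x + lin 1 (fst (snd (facet p S))) y \<le> snd (snd (facet p S)))
     \<longleftrightarrow> (\<Sum>i<p-1. \<bar>x i - x (p-1)/2\<bar>) \<le> (1 - y 0) * ((real p - 1)/2) + (real p - 3) * (x (p-1) - 1)/2"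
    unfolding lin_facet_le_iff[OF p] sum_abs_le_iff_signed_sums_le by auto
  have "(\<forall>(ax, ay, b) \<in> set (facets p). lin p ax x + lin 1 ay y \<le> b) \<longleftrightarrow>
     (- y 0 \<le> 0 \<and> x (p-1) + y 0 \<le> 2 \<and> - x (p-1) + y 0 \<le> 0) \<and>
     (\<forall>S\<in>Pow {..<p-1}.
        lin p (fst (facet p S)) x + lin 1 (fst (snd (facet p S))) y \<le> snd (snd (facet p S)))"
  proof -
    have "lin p (\<lambda>_. 0) x + lin 1 (\<lambda>_. -1) y = - y 0"
      "lin p (\<lambda>j. if j = p-1 then 1 else 0) x + lin 1 (\<lambda>_. 1) y = x (p-1) + y 0"
      "lin p (\<lambda>j. if j = p-1 then -1 else 0) x + lin 1 (\<lambda>_. 1) y = - x (p-1) + y 0"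
      unfolding unit by (simp_all add: lin_def)
    then show ?thesis unfolding set_facets by (auto simp: split_beta)
  qed
  also have "\<dots> \<longleftrightarrow> (x, y) \<in> pyramid p 1"
    unfolding signed using xy by (auto simp: pyramid_def base_def abs_le_iff)
  finally show ?thesis by simp
qed

lemma rational_polytope_pyramid:
  assumes p: "3 \<le> p"
  shows "rational_polytope p 1 (pyramid p 1)"
  unfolding rational_polytope_def
proof (intro conjI exI[of _ "facets p"] exI[of _ "real p"])
  have "(\<Sum>i<p-1. if i \<in> S then 1 else -1 :: real) \<in> \<rat>" for S
    by (intro Rats_sum) auto
  then show "\<forall>(ax, ay, b)\<in>set (facets p). (\<forall>i<p. ax i \<in> \<rat>) \<and> (\<forall>j<1. ay j \<in> \<rat>) \<and> b \<in> \<rat>"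
    unfolding set_facets by (auto simp: facet_def)
  have "pyramid p 1 \<subseteq> space p 1" by (auto simp: pyramid_def)
  then have "z \<in> pyramid p 1 \<longleftrightarrow>
      z \<in> {(x, y) \<in> space p 1. \<forall>(ax, ay, b)\<in>set (facets p). lin p ax x + lin 1 ay y \<le> b}" for z
    using mem_pyramid_iff_facets[of p "fst z" "snd z"] p by (cases z) force
  then show "pyramid p 1 = {(x, y) \<in> space p 1. \<forall>(ax, ay, b)\<in>set (facets p). lin p ax x + lin 1 ay y \<le> b}"
    by blast
  show "\<forall>(x, y)\<in>pyramid p 1. (\<forall>i<p. \<bar>x i\<bar> \<le> real p) \<and> (\<forall>j<1. \<bar>y j\<bar> \<le> real p)"
    using pyramid_bounded[OF p] by auto
qed

section \<open>Optimal values of the height\<close>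

lemma int_hull_pyramid_nonempty:
  assumes "3 \<le> p"
  shows "int_hull p (pyramid p 1) \<noteq> {}"
proof -
  have "(\<lambda>_. 0, height 0) \<in> int_hull p (pyramid p 1)"
    unfolding int_hull_def using assms by (intro mem_conv) (auto simp: mem_pyramid_height base_def field_simps)
  then show ?thesis by blast
qed

lemma Sup_height_int_hull_le_0:
  assumes p: "3 \<le> p"
  shows "Sup ((\<lambda>(x, y). y 0) ` int_hull p (pyramid p 1)) \<le> 0"
proof -
  have "lin p (\<lambda>_. 0) x + lin 1 (\<lambda>_. 1) y \<le> 0" if "(x, y) \<in> int_hull p (pyramid p 1)" for x y
    using that unfolding int_hull_def
  proof (rule conv_lin_le[rotated])
    fix x y assume "(x, y) \<in> {(x, y) \<in> pyramid p 1. \<forall>i<p. x i \<in> \<int>}"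
    then show "lin p (\<lambda>_. 0) x + lin 1 (\<lambda>_. 1) y \<le> 0"
      using pyramid_integral_height_le_0[of p x y] p by (simp add: lin_def)
  qed
  then show "Sup ((\<lambda>(x, y). y 0) ` int_hull p (pyramid p 1)) \<le> 0"
    using int_hull_pyramid_nonempty[OF p] by (intro cSup_least) (auto simp: lin_def)
qed

lemma Sup_height_k_disj_iter_ge:
  assumes p: "3 \<le> p"
  shows "(1 / (2 * (real p - 1))) ^ n \<le>
    Sup ((\<lambda>(x, y). y 0) ` k_disj_iter p 1 (2 ^ (p - 1) + 1) n (pyramid p 1))"
    (is "?t \<le> Sup (?height ` ?P\<^sub>n)")
proof (rule cSup_upper)
  have "(apex p, height ?t) \<in> pyramid p ?t" using p by (intro apex_mem_pyramid) auto
  then have "(apex p, height ?t) \<in> ?P\<^sub>n" using pyramid_subset_k_disj_iter[OF p] by blast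
  then show "?t \<in> ?height ` ?P\<^sub>n" by (rule rev_image_eqI) (simp add: height_def)
  show "bdd_above (?height ` ?P\<^sub>n)"
  proof (rule bdd_aboveI2)
    fix z assume "z \<in> ?P\<^sub>n"
    then have "z \<in> pyramid p 1" using k_disj_iter_subset by blast
    then show "?height z \<le> 1" using pyramid_height_le by (cases z) fastforce
  qed
qed

theorem theorem2p11:
  fixes p :: nat
  assumes "p \<ge> 3"
  shows "\<exists>(q::nat) (P::pt set) (c::nat \<Rightarrow> real) (h::nat \<Rightarrow> real).
           q \<ge> 1 \<and> rational_polytope p q P \<and> int_hull p P \<noteq> {} \<and>
           (\<forall>i<p. c i \<in> \<rat>) \<and> (\<forall>j<q. h j \<in> \<rat>) \<and>
           (let \<gamma>star = Sup ((\<lambda>(x, y). lin p c x + lin q h y) ` int_hull p P) in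
            (\<forall>n::nat. Sup ((\<lambda>(x, y). lin p c x + lin q h y) `
                       k_disj_iter p q (2 ^ (p - 1) + 1) n P) > \<gamma>star))"
proof -
  have p: "3 \<le> p" using assms .
  have objective: "(\<lambda>(x, y). lin p (\<lambda>_. 0) x + lin 1 (\<lambda>_. 1) y) = (\<lambda>(x, y). y 0)"
    by (simp add: lin_def)
  have "0 < (1 / (2 * (real p - 1))) ^ n" for n using p by simp
  then have "Sup ((\<lambda>(x, y). y 0) ` int_hull p (pyramid p 1)) <
      Sup ((\<lambda>(x, y). y 0) ` k_disj_iter p 1 (2 ^ (p - 1) + 1) n (pyramid p 1))" for n
    using Sup_height_int_hull_le_0[OF p] Sup_height_k_disj_iter_ge[OF p, of n]
    by (meson le_less_trans less_le_trans)
  then show ?thesis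
    using rational_polytope_pyramid[OF p] int_hull_pyramid_nonempty[OF p]
    unfolding Let_def
    by (intro exI[of _ 1] exI[of _ "pyramid p 1"] exI[of _ "\<lambda>_. 0"] exI[of _ "\<lambda>_. 1"])
      (simp only: objective, simp)
qed

end
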